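(* Let $\lambda=(a,b)$ with $a\ge b\ge1$, and let $\mu=(\mu_1,\dots,\mu_M)$ be a content with $\sum_i\mu_i=a+b$ such that $\mu_i=2$ for exactly $m$ indices $i$ and $\mu_i=1$ for the remaining indices (so $M=a+b-m$). Then for every $k\ge0$, $$|S_k(\lambda,\mu)|=\frac{a-b+1+2k}{a+1+k-m}\binom{a+b-2m}{b-k-m}$$ (interpreted as $0$ when $b-k-m<0$).
   Context: The shape $(a,b)$ has $a$ left-justified boxes in row 1 and $b$ in row 2. A filling of shape $\lambda$ and content $\mu$ assigns positive integers to boxes so that value $v$ occurs exactly $\mu_v$ times; row-standard means strictly increasing along rows from left to right. Inversion pairs of a row-standard $\tau$: for a box $c$ and $r\ge1$ let $c^{(r)}$ be the box $r$ positions to its right, if it exists. For distinct boxes $c,c'$ in the same column with $\tau(c)<\tau(c')$, let $r\ge1$ be least such that one of $c^{(r)},c'^{(r)}$ does not exist or both exist with $\tau(c^{(r)})\ne\tau(c'^{(r)})$. $(c,c')$ is an inversion pair if either (one does not exist and $c$ lies below $c'$) or (both exist and $\tau(c^{(r)})>\tau(c'^{(r)})$). $S_k(\lambda,\mu)$: row-standard fillings of shape $\lambda$ and content $\mu$ with exactly $k$ inversion pairs (counted as pairs of boxes, with multiplicity). *)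

theory Defs
  imports Complex_Main
begin

text \<open>A filling T is a list of rows (top row first); row i (0-indexed) is the list of
entries of row i+1, left to right. A box is a pair (i,j)
(row index, column index, both 0-indexed).\<close>

definition box_ex :: "nat list list \<Rightarrow> nat \<Rightarrow> nat \<Rightarrow> bool" where
  "box_ex T i j \<longleftrightarrow> i < length T \<and> j < length (T ! i)"

definition tval :: "nat list list \<Rightarrow> nat \<Rightarrow> nat \<Rightarrow> nat" where
  "tval T i j = T ! i ! j"

definition row_standard :: "nat list list \<Rightarrow> bool" where
  "row_standard T \<longleftrightarrow> (\<forall>row \<in> set T. sorted_wrt (<) row)"

definition has_content :: "nat list list \<Rightarrow> nat list \<Rightarrow> bool" where
  "has_content T mu \<longleftrightarrow>
     (\<forall>v. count_list (concat T) v = (if 1 \<le> v \<and> v \<le> length mu then mu ! (v - 1) else 0))"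

definition first_diff :: "nat list list \<Rightarrow> nat \<Rightarrow> nat \<Rightarrow> nat \<Rightarrow> nat" where
  "first_diff T i i' j = (LEAST r. 1 \<le> r \<and>
      (\<not> box_ex T i (j + r) \<or> \<not> box_ex T i' (j + r) \<or> tval T i (j + r) \<noteq> tval T i' (j + r)))"

definition inv_pair :: "nat list list \<Rightarrow> nat \<times> nat \<Rightarrow> nat \<times> nat \<Rightarrow> bool" where
  "inv_pair T c c' \<longleftrightarrow>
     (case c of (i, j) \<Rightarrow> case c' of (i', j') \<Rightarrow>
        j = j' \<and> i \<noteq> i' \<and> box_ex T i j \<and> box_ex T i' j \<and> tval T i j < tval T i' j \<and>
        (let r = first_diff T i i' j in
           ((\<not> box_ex T i (j + r) \<or> \<not> box_ex T i' (j + r)) \<and> i > i') \<or>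
           (box_ex T i (j + r) \<and> box_ex T i' (j + r) \<and> tval T i (j + r) > tval T i' (j + r))))"

definition num_inversions :: "nat list list \<Rightarrow> nat" where
  "num_inversions T = card {(c, c'). inv_pair T c c'}"

definition S :: "nat \<Rightarrow> nat list \<Rightarrow> nat list \<Rightarrow> nat list list set" where
  "S k lam mu = {T. map length T = lam \<and> row_standard T \<and> has_content T mu \<and> num_inversions T = k}"

end

theory Submission
  imports Defs
begin

text \<open>
  Write a two-row filling as a top row x and a bottom row y. Two boxes can only form an
  inversion pair if they share a column j with x!j \<noteq> y!j, and then they do exactly when the
  row with the smaller entry at j also wins the comparison to the right of j: the winner is the
  row with the larger entry at the first column where both rows have different entries, or the
  bottom row if one of the rows ends first.

  Induct on the content by removing the largest value M. It sits at the right end of the rows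
  that contain it. If \<open>\<mu>\<close> ends in a 2, M ends both rows, and deleting both copies preserves
  inversions. If \<open>\<mu>\<close> ends in a 1, M ends a single row: deleting it from the bottom row,
  or from the top row when a > b, preserves inversions, while for a = b deleting it from the
  top row and swapping the rows loses exactly the inversion in the last column. So the counts
  obey the Pascal-type recursion of the ballot numbers C(n,c) - C(n,c-1) with n = a+b-2m and
  c = b-m-k, and these equal the closed form of the theorem.
\<close>

section \<open>Comparing rows from a column on\<close>

fun first_mismatch :: "nat list \<Rightarrow> nat list \<Rightarrow> bool option" where
  "first_mismatch (p # ps) (q # qs) = (if p = q then first_mismatch ps qs else Some (q < p))"
| "first_mismatch _ _ = None"

definition mismatch_pos :: "nat list \<Rightarrow> nat list \<Rightarrow> nat" where
  "mismatch_pos xs ys = (LEAST p. \<not> (p < length xs \<and> p < length ys \<and> xs ! p = ys ! p))"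

lemma mismatch_pos_Cons:
  "mismatch_pos (p # ps) (q # qs) = (if p = q then Suc (mismatch_pos ps qs) else 0)"
proof (cases "p = q")
  case True
  have "\<not> (length ps < length ps \<and> length ps < length qs \<and> ps ! length ps = qs ! length ps)"
    by simp
  then show ?thesis
    unfolding mismatch_pos_def using True
    by (subst Least_Suc[where n = "Suc (length ps)"]) auto
qed (simp add: mismatch_pos_def)

lemma mismatch_pos_Nil [simp]: "mismatch_pos [] ys = 0" "mismatch_pos xs [] = 0"
  by (simp_all add: mismatch_pos_def)

lemma mismatch_pos_differ:
  "mismatch_pos xs ys < length xs \<Longrightarrow> mismatch_pos xs ys < length ys \<Longrightarrow>
     xs ! mismatch_pos xs ys \<noteq> ys ! mismatch_pos xs ys"
  using LeastI[of "\<lambda>p. \<not> (p < length xs \<and> p < length ys \<and> xs ! p = ys ! p)" "length xs"]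
  unfolding mismatch_pos_def by auto

lemma first_mismatch_eq:
  "first_mismatch xs ys = (let p = mismatch_pos xs ys in
     if p < length xs \<and> p < length ys then Some (ys ! p < xs ! p) else None)"
  by (induction xs ys rule: first_mismatch.induct) (auto simp: mismatch_pos_Cons Let_def)

lemma first_mismatch_append_left:
  "length ys \<le> length xs \<Longrightarrow> first_mismatch (xs @ zs) ys = first_mismatch xs ys"
proof (induction xs arbitrary: ys)
  case (Cons p ps)
  then show ?case by (cases ys) auto
qed simp

lemma first_mismatch_snoc_both:
  "\<forall>e\<in>set xs \<union> set ys. e < M \<Longrightarrow> length ys \<le> length xs \<Longrightarrow>
     first_mismatch (xs @ [M]) (ys @ [M]) = Some True \<longleftrightarrow> first_mismatch xs ys = Some True"
proof (induction xs arbitrary: ys)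
  case (Cons p ps)
  then show ?case by (cases ys) auto
qed simp

lemma first_mismatch_snoc_right:
  "\<forall>e\<in>set xs. e < M \<Longrightarrow> length ys < length xs \<Longrightarrow>
     first_mismatch xs (ys @ [M]) = Some True \<longleftrightarrow> first_mismatch xs ys = Some True"
proof (induction xs arbitrary: ys)
  case (Cons p ps)
  then show ?case by (cases ys) auto
qed simp

lemma first_mismatch_snoc_left:
  "\<forall>e\<in>set ys. e < M \<Longrightarrow> length xs < length ys \<Longrightarrow>
     first_mismatch (xs @ [M]) ys = Some True \<longleftrightarrow> first_mismatch ys xs \<noteq> Some True"
proof (induction xs arbitrary: ys)
  case Nil
  then show ?case by (cases ys) auto
next
  case (Cons p ps)
  then show ?case by (cases ys) auto
qed

section \<open>Inversion pairs of two-row fillings\<close>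

lemma first_diff_sym: "first_diff T i' i j = first_diff T i i' j"
  unfolding first_diff_def by metis

lemma first_diff_two_rows:
  "first_diff [x, y] 0 1 j = Suc (mismatch_pos (drop (Suc j) x) (drop (Suc j) y))"
  unfolding first_diff_def mismatch_pos_def
  by (subst Least_Suc[where n = "Suc (length x)"])
    (auto simp: box_ex_def tval_def intro!: arg_cong[where f = Least])

definition right_top_larger :: "nat list \<Rightarrow> nat list \<Rightarrow> nat \<Rightarrow> bool" where
  "right_top_larger x y j \<longleftrightarrow> first_mismatch (drop (Suc j) x) (drop (Suc j) y) = Some True"

definition inverted_columns :: "nat list \<Rightarrow> nat list \<Rightarrow> nat set" where
  "inverted_columns x y = {j. j < length x \<and> j < length y \<and> x ! j \<noteq> y ! j \<and>
     (x ! j < y ! j \<longleftrightarrow> right_top_larger x y j)}"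

lemma inv_pair_two_rows:
  "inv_pair [x, y] (0, j) (1, j) \<longleftrightarrow>
     j < length x \<and> j < length y \<and> x ! j < y ! j \<and> right_top_larger x y j"
  "inv_pair [x, y] (1, j) (0, j) \<longleftrightarrow>
     j < length x \<and> j < length y \<and> y ! j < x ! j \<and> \<not> right_top_larger x y j"
proof -
  define p where "p = mismatch_pos (drop (Suc j) x) (drop (Suc j) y)"
  have first_diff: "first_diff [x, y] 0 1 j = Suc p" "first_diff [x, y] 1 0 j = Suc p"
    using first_diff_two_rows[of x y j] first_diff_sym[of "[x, y]" 1 0 j] p_def by simp_all
  have "x ! (Suc j + p) \<noteq> y ! (Suc j + p)" if "Suc j + p < length x" "Suc j + p < length y"
    using mismatch_pos_differ[of "drop (Suc j) x" "drop (Suc j) y"] that p_def by simp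
  then show "inv_pair [x, y] (0, j) (1, j) \<longleftrightarrow>
      j < length x \<and> j < length y \<and> x ! j < y ! j \<and> right_top_larger x y j"
    "inv_pair [x, y] (1, j) (0, j) \<longleftrightarrow>
      j < length x \<and> j < length y \<and> y ! j < x ! j \<and> \<not> right_top_larger x y j"
    using first_diff
    by (auto simp: inv_pair_def right_top_larger_def first_mismatch_eq Let_def box_ex_def tval_def
        p_def[symmetric])
qed

lemma num_inversions_two_rows: "num_inversions [x, y] = card (inverted_columns x y)"
proof -
  define col_pair :: "nat \<Rightarrow> (nat \<times> nat) \<times> nat \<times> nat"
    where "col_pair j = (if x ! j < y ! j then ((0, j), (1, j)) else ((1, j), (0, j)))" for j
  have "{(c, c'). inv_pair [x, y] c c'} = col_pair ` inverted_columns x y"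
  proof (intro equalityI subsetI)
    fix z assume "z \<in> {(c, c'). inv_pair [x, y] c c'}"
    then obtain i i' j where z: "z = ((i, j), (i', j))" "inv_pair [x, y] (i, j) (i', j)"
      and "i < 2" "i' < 2" "i \<noteq> i'"
      by (auto simp: inv_pair_def box_ex_def split: prod.splits)
    then consider "i = 0" "i' = 1" | "i = 1" "i' = 0"
      by linarith
    then show "z \<in> col_pair ` inverted_columns x y"
      using z by cases (auto simp: inv_pair_two_rows[simplified] col_pair_def
          inverted_columns_def intro!: image_eqI[of _ _ j])
  qed (auto simp: col_pair_def inverted_columns_def inv_pair_two_rows[simplified]
      not_less_iff_gr_or_eq)
  moreover have "inj col_pair"
    by (rule inj_on_inverseI[where g = "\<lambda>z. snd (fst z)"]) (simp add: col_pair_def)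
  ultimately show ?thesis
    unfolding num_inversions_def by (simp add: card_image inj_on_subset)
qed

lemma not_right_top_larger_at_end:
  "length x \<le> Suc j \<or> length y \<le> Suc j \<Longrightarrow> \<not> right_top_larger x y j"
  by (auto simp: right_top_larger_def)

lemma right_top_larger_snoc_both:
  assumes "\<forall>e\<in>set x \<union> set y. e < M" "length y \<le> length x" "j < length y"
  shows "right_top_larger (x @ [M]) (y @ [M]) j \<longleftrightarrow> right_top_larger x y j"
proof -
  have "\<forall>e\<in>set (drop (Suc j) x) \<union> set (drop (Suc j) y). e < M"
    using assms(1) by (auto dest: in_set_dropD)
  then show ?thesis
    using assms(2,3) unfolding right_top_larger_def by (simp add: first_mismatch_snoc_both)
qed

lemma right_top_larger_snoc_right:
  assumes "\<forall>e\<in>set x. e < M" "length y < length x" "j < length y"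
  shows "right_top_larger x (y @ [M]) j \<longleftrightarrow> right_top_larger x y j"
proof -
  have "\<forall>e\<in>set (drop (Suc j) x). e < M"
    using assms(1) by (auto dest: in_set_dropD)
  then show ?thesis
    using assms(2,3) unfolding right_top_larger_def by (simp add: first_mismatch_snoc_right)
qed

lemma right_top_larger_snoc_left:
  assumes "length y \<le> length x" "j < length y"
  shows "right_top_larger (x @ [M]) y j \<longleftrightarrow> right_top_larger x y j"
  using assms unfolding right_top_larger_def by (simp add: first_mismatch_append_left)

lemma right_top_larger_snoc_left_swap:
  assumes "\<forall>e\<in>set y. e < M" "length x < length y" "j < length x"
  shows "right_top_larger (x @ [M]) y j \<longleftrightarrow> \<not> right_top_larger y x j"
proof -
  have "\<forall>e\<in>set (drop (Suc j) y). e < M"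
    using assms(1) by (auto dest: in_set_dropD)
  then show ?thesis
    using assms(2,3) unfolding right_top_larger_def by (simp add: first_mismatch_snoc_left)
qed

lemma inverted_columns_snoc_both:
  assumes "\<forall>e\<in>set x \<union> set y. e < M" "length y \<le> length x"
  shows "inverted_columns (x @ [M]) (y @ [M]) = inverted_columns x y"
  using assms
    by (auto simp: inverted_columns_def right_top_larger_snoc_both nth_append less_Suc_eq
      not_right_top_larger_at_end) (metis UnI1 nth_mem less_asym)

lemma inverted_columns_snoc_right:
  assumes "\<forall>e\<in>set x. e < M" "length y < length x"
  shows "inverted_columns x (y @ [M]) = inverted_columns x y"
  using assms
    by (auto simp: inverted_columns_def right_top_larger_snoc_right nth_append less_Suc_eq
      not_right_top_larger_at_end) (metis nth_mem less_asym)

lemma inverted_columns_snoc_left: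
  assumes "length y \<le> length x"
  shows "inverted_columns (x @ [M]) y = inverted_columns x y"
  using assms
  by (auto simp: inverted_columns_def right_top_larger_snoc_left nth_append)

lemma inverted_columns_snoc_left_swap:
  assumes "\<forall>e\<in>set y. e < M" "length y = Suc (length x)"
  shows "inverted_columns (x @ [M]) y = insert (length x) (inverted_columns y x)"
  using assms
    by (auto simp: inverted_columns_def right_top_larger_snoc_left_swap nth_append less_Suc_eq
      not_right_top_larger_at_end) (metis nth_mem lessI less_asym)

lemma count_list_replicate: "count_list (replicate n a) v = (if v = a then n else 0)"
  by (induction n) auto

lemma count_list_distinct_le_1: "distinct xs \<Longrightarrow> count_list xs v \<le> 1"
  by (induction xs) auto

lemma sorted_split_max:
  fixes M :: "'a :: linorder"
  assumes "sorted_wrt (<) xs" "\<forall>e\<in>set xs. e \<le> M"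
  obtains ys where "xs = ys @ replicate (count_list xs M) M" "\<forall>e\<in>set ys. e < M"
proof (cases "M \<in> set xs")
  case True
  then obtain ys z where xs: "xs = ys @ [z]"
    by (cases xs rule: rev_cases) auto
  then have "\<forall>e\<in>set ys. e < z" "z \<le> M"
    using assms by (auto simp: sorted_wrt_append)
  moreover from this have "M \<notin> set ys"
    by fastforce
  ultimately show ?thesis
    using that True xs by auto
next
  case False
  then show ?thesis
    using that[of xs] assms(2) by (auto simp: count_list_0_iff order.strict_iff_order)
qed

lemma sum_list_one_two:
  "set mu \<subseteq> {1, 2} \<Longrightarrow> sum_list mu = length mu + length (filter (\<lambda>x. x = 2) mu)"
  by (induction mu) auto

lemma has_content_entry_bounds:
  "has_content T mu \<Longrightarrow> v \<in> set (concat T) \<Longrightarrow> 1 \<le> v \<and> v \<le> length mu"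
  unfolding has_content_def by (metis count_list_0_iff)

lemma has_content_swap_rows: "has_content [y, x] mu \<longleftrightarrow> has_content [x, y] mu"
  by (simp add: has_content_def add.commute)

lemma has_content_snoc:
  assumes "\<forall>e\<in>set x \<union> set y. e < Suc (length mu)"
  shows "has_content [x @ replicate i (Suc (length mu)), y @ replicate j (Suc (length mu))]
      (mu @ [i + j]) \<longleftrightarrow> has_content [x, y] mu"
proof -
  let ?M = "Suc (length mu)"
  let ?mult = "\<lambda>mu v. if 1 \<le> v \<and> v \<le> length mu then mu ! (v - 1) else 0"
  have "count_list x ?M = 0" "count_list y ?M = 0"
    using assms by (auto simp: count_list_0_iff)
  then have count: "count_list (concat [x @ replicate i ?M, y @ replicate j ?M]) v =
      count_list (concat [x, y]) v + (if v = ?M then i + j else 0)" for v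
    by (simp add: count_list_replicate)
  have mult: "?mult (mu @ [i + j]) v = ?mult mu v + (if v = ?M then i + j else 0)" for v
    by (auto simp: nth_append)
  show ?thesis
    unfolding has_content_def by (simp only: count mult add_right_cancel)
qed

section \<open>Removing the largest entry\<close>

definition S_pairs :: "nat \<Rightarrow> nat \<Rightarrow> nat \<Rightarrow> nat list \<Rightarrow> (nat list \<times> nat list) set" where
  "S_pairs k a b mu = {(x, y). [x, y] \<in> S k [a, b] mu}"

lemma mem_S_pairs:
  "(x, y) \<in> S_pairs k a b mu \<longleftrightarrow> length x = a \<and> length y = b \<and>
     sorted_wrt (<) x \<and> sorted_wrt (<) y \<and> has_content [x, y] mu \<and> card (inverted_columns x y) = k"
  by (auto simp: S_pairs_def S_def row_standard_def num_inversions_two_rows)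

lemma card_S_eq_card_S_pairs: "card (S k [a, b] mu) = card (S_pairs k a b mu)"
proof -
  have "S k [a, b] mu = (\<lambda>(x, y). [x, y]) ` S_pairs k a b mu"
  proof (intro equalityI subsetI)
    fix T assume "T \<in> S k [a, b] mu"
    moreover from this obtain x y where "T = [x, y]"
      by (auto simp: S_def length_Suc_conv)
    ultimately show "T \<in> (\<lambda>(x, y). [x, y]) ` S_pairs k a b mu"
      by (auto simp: S_pairs_def)
  qed (auto simp: S_pairs_def)
  moreover have "inj (\<lambda>(x, y). [x, y] :: nat list list)"
    by (auto simp: inj_def)
  ultimately show ?thesis
    by (simp add: card_image inj_on_subset)
qed

lemma finite_S_pairs: "finite (S_pairs k a b mu)"
proof -
  let ?rows = "\<lambda>n. {xs. set xs \<subseteq> {..length mu} \<and> length xs = n}"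
  have "S_pairs k a b mu \<subseteq> ?rows a \<times> ?rows b"
    by (fastforce simp: mem_S_pairs dest: has_content_entry_bounds[where T = "[_, _]"])
  then show ?thesis
    by (rule finite_subset) (simp add: finite_lists_length_eq)
qed

lemma S_pairs_entries_less:
  "(x, y) \<in> S_pairs k a b mu \<Longrightarrow> \<forall>e\<in>set x \<union> set y. e < Suc (length mu)"
  using has_content_entry_bounds[of "[x, y]" mu] by (fastforce simp: mem_S_pairs less_Suc_eq_le)

lemma S_pairs_snoc_split_max:
  fixes mu :: "nat list"
  defines "M \<equiv> Suc (length mu)"
  assumes "(x', y') \<in> S_pairs k a b (mu @ [t])"
  obtains x y i j where "x' = x @ replicate i M" "y' = y @ replicate j M"
    "\<forall>e\<in>set x \<union> set y. e < M" "i + j = t" "i \<le> 1" "j \<le> 1"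
proof -
  have content: "has_content [x', y'] (mu @ [t])" and sorted: "sorted_wrt (<) x'" "sorted_wrt (<) y'"
    using assms(2) by (simp_all add: mem_S_pairs)
  have "\<forall>e\<in>set x'. e \<le> M" "\<forall>e\<in>set y'. e \<le> M"
    using has_content_entry_bounds[OF content] by (auto simp: M_def)
  then obtain x y where x: "x' = x @ replicate (count_list x' M) M" "\<forall>e\<in>set x. e < M"
    and y: "y' = y @ replicate (count_list y' M) M" "\<forall>e\<in>set y. e < M"
    using sorted_split_max sorted by metis
  have "count_list x' M + count_list y' M = t"
    using content unfolding has_content_def M_def by (auto dest: spec[of _ "Suc (length mu)"])
  moreover have "count_list x' M \<le> 1" "count_list y' M \<le> 1"
    using sorted by (simp_all only: strict_sorted_iff count_list_distinct_le_1)
  ultimately show ?thesis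
    using x y by (intro that[OF x(1) y(1)]) auto
qed

lemma mem_S_pairs_snoc_both:
  fixes mu :: "nat list"
  defines "M \<equiv> Suc (length mu)"
  assumes "b \<le> a" "\<forall>e\<in>set x \<union> set y. e < M"
  shows "(x @ [M], y @ [M]) \<in> S_pairs k (Suc a) (Suc b) (mu @ [2]) \<longleftrightarrow> (x, y) \<in> S_pairs k a b mu"
  using assms has_content_snoc[of x y mu 1 1]
  by (auto simp: mem_S_pairs sorted_wrt_append inverted_columns_snoc_both numeral_2_eq_2)

lemma mem_S_pairs_snoc_top:
  fixes mu :: "nat list"
  defines "M \<equiv> Suc (length mu)"
  assumes "b \<le> a" "\<forall>e\<in>set x \<union> set y. e < M"
  shows "(x @ [M], y) \<in> S_pairs k (Suc a) b (mu @ [1]) \<longleftrightarrow> (x, y) \<in> S_pairs k a b mu"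
  using assms has_content_snoc[of x y mu 1 0]
  by (auto simp: mem_S_pairs sorted_wrt_append inverted_columns_snoc_left)

lemma mem_S_pairs_snoc_bottom:
  fixes mu :: "nat list"
  defines "M \<equiv> Suc (length mu)"
  assumes "b < a" "\<forall>e\<in>set x \<union> set y. e < M"
  shows "(x, y @ [M]) \<in> S_pairs k a (Suc b) (mu @ [1]) \<longleftrightarrow> (x, y) \<in> S_pairs k a b mu"
  using assms has_content_snoc[of x y mu 0 1]
  by (auto simp: mem_S_pairs sorted_wrt_append inverted_columns_snoc_right)

lemma mem_S_pairs_snoc_top_swap:
  fixes mu :: "nat list"
  defines "M \<equiv> Suc (length mu)"
  assumes "\<forall>e\<in>set x \<union> set y. e < M"
  shows "(x @ [M], y) \<in> S_pairs k (Suc a) (Suc a) (mu @ [1]) \<longleftrightarrow>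
    k \<noteq> 0 \<and> (y, x) \<in> S_pairs (k - 1) (Suc a) a mu"
proof -
  have "card (inverted_columns (x @ [M]) y) = Suc (card (inverted_columns y x))"
    if "length y = Suc (length x)"
  proof -
    have "length x \<notin> inverted_columns y x" "finite (inverted_columns y x)"
      by (auto simp: inverted_columns_def)
    then show ?thesis
      using assms(2) that by (simp add: inverted_columns_snoc_left_swap)
  qed
  then show ?thesis
    using assms has_content_snoc[of x y mu 1 0]
    by (auto simp: mem_S_pairs sorted_wrt_append has_content_swap_rows)
qed

lemma S_pairs_0_snoc_two: "S_pairs k a 0 (mu @ [2]) = {}"
proof -
  have False if mem: "(x', y') \<in> S_pairs k a 0 (mu @ [2])" for x' y'
  proof -
    have "y' = []"
      using mem by (simp add: mem_S_pairs)
    from mem show False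
      by (cases rule: S_pairs_snoc_split_max) (use \<open>y' = []\<close> in auto)
  qed
  then show ?thesis
    by auto
qed

lemma card_S_pairs_snoc_two:
  assumes "b \<le> a"
  shows "card (S_pairs k (Suc a) (Suc b) (mu @ [2])) = card (S_pairs k a b mu)"
proof -
  define M where "M = Suc (length mu)"
  have "S_pairs k (Suc a) (Suc b) (mu @ [2]) = (\<lambda>(x, y). (x @ [M], y @ [M])) ` S_pairs k a b mu"
  proof (intro equalityI subsetI)
    fix z assume z: "z \<in> S_pairs k (Suc a) (Suc b) (mu @ [2])"
    obtain x' y' where z_eq: "z = (x', y')"
      by fastforce
    obtain x y i j where "x' = x @ replicate i M" "y' = y @ replicate j M"
      "\<forall>e\<in>set x \<union> set y. e < M" "i + j = 2" "i \<le> 1" "j \<le> 1"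
      using z unfolding z_eq M_def by (rule S_pairs_snoc_split_max)
    then have "x' = x @ [M]" "y' = y @ [M]" "\<forall>e\<in>set x \<union> set y. e < M"
      by (auto simp: numeral_2_eq_2 le_Suc_eq)
    then show "z \<in> (\<lambda>(x, y). (x @ [M], y @ [M])) ` S_pairs k a b mu"
      using z z_eq mem_S_pairs_snoc_both[OF assms] by (auto simp: M_def)
  qed (use mem_S_pairs_snoc_both[OF assms] S_pairs_entries_less in \<open>auto simp: M_def\<close>)
  moreover have "inj_on (\<lambda>(x, y). (x @ [M], y @ [M])) (S_pairs k a b mu)"
    by (auto simp: inj_on_def)
  ultimately show ?thesis
    by (simp add: card_image)
qed

lemma S_pairs_snoc_one_cases:
  fixes mu :: "nat list"
  defines "M \<equiv> Suc (length mu)"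
  assumes "(x', y') \<in> S_pairs k a b (mu @ [1])"
  obtains (top) x where "x' = x @ [M]" "M \<notin> set y'" "\<forall>e\<in>set x \<union> set y'. e < M"
    | (bottom) y where "y' = y @ [M]" "M \<notin> set x'" "\<forall>e\<in>set x' \<union> set y. e < M"
proof -
  obtain x y i j where "x' = x @ replicate i M" "y' = y @ replicate j M"
    "\<forall>e\<in>set x \<union> set y. e < M" "i + j = 1"
    using assms(2) unfolding M_def by (rule S_pairs_snoc_split_max)
  then consider "x' = x @ [M]" "y' = y" "\<forall>e\<in>set x \<union> set y. e < M"
    | "x' = x" "y' = y @ [M]" "\<forall>e\<in>set x \<union> set y. e < M"
    by (cases i) auto
  then show ?thesis
    using top bottom by cases blast+
qed

lemma card_S_pairs_snoc_one:
  "card (S_pairs k a b (mu @ [1])) =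
     card {(x, y) \<in> S_pairs k a b (mu @ [1]). Suc (length mu) \<in> set x} +
     card {(x, y) \<in> S_pairs k a b (mu @ [1]). Suc (length mu) \<in> set y}"
proof -
  have "S_pairs k a b (mu @ [1]) =
      {(x, y) \<in> S_pairs k a b (mu @ [1]). Suc (length mu) \<in> set x} \<union>
      {(x, y) \<in> S_pairs k a b (mu @ [1]). Suc (length mu) \<in> set y}"
  proof (intro equalityI subsetI)
    fix z assume "z \<in> S_pairs k a b (mu @ [1])"
    moreover obtain x y where "z = (x, y)"
      by fastforce
    ultimately show "z \<in> {(x, y) \<in> S_pairs k a b (mu @ [1]). Suc (length mu) \<in> set x} \<union>
      {(x, y) \<in> S_pairs k a b (mu @ [1]). Suc (length mu) \<in> set y}"
      by (auto elim!: S_pairs_snoc_one_cases simp del: One_nat_def)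
  qed auto
  moreover have "{(x, y) \<in> S_pairs k a b (mu @ [1]). Suc (length mu) \<in> set x} \<inter>
      {(x, y) \<in> S_pairs k a b (mu @ [1]). Suc (length mu) \<in> set y} = {}"
    by (auto elim!: S_pairs_snoc_one_cases simp del: One_nat_def)
  ultimately show ?thesis
    using finite_S_pairs by (metis (no_types, lifting) card_Un_disjoint finite_Un)
qed

lemma card_S_pairs_snoc_one_top:
  assumes "b \<le> a"
  shows "card {(x, y) \<in> S_pairs k (Suc a) b (mu @ [1]). Suc (length mu) \<in> set x} =
    card (S_pairs k a b mu)"
proof -
  define M where "M = Suc (length mu)"
  have "{(x, y) \<in> S_pairs k (Suc a) b (mu @ [1]). M \<in> set x} =
      (\<lambda>(x, y). (x @ [M], y)) ` S_pairs k a b mu"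
  proof (intro equalityI subsetI)
    fix z assume z: "z \<in> {(x, y) \<in> S_pairs k (Suc a) b (mu @ [1]). M \<in> set x}"
    obtain x' y where z_eq: "z = (x', y)"
      by fastforce
    from z have mem: "(x', y) \<in> S_pairs k (Suc a) b (mu @ [1])" and "M \<in> set x'"
      by (simp_all add: z_eq)
    then obtain x where "x' = x @ [M]" "\<forall>e\<in>set x \<union> set y. e < M"
      unfolding M_def by (cases rule: S_pairs_snoc_one_cases) auto
    with mem show "z \<in> (\<lambda>(x, y). (x @ [M], y)) ` S_pairs k a b mu"
      unfolding z_eq M_def by (auto simp: mem_S_pairs_snoc_top[OF assms] simp del: One_nat_def)
  qed (use mem_S_pairs_snoc_top[OF assms] S_pairs_entries_less in \<open>auto simp: M_def\<close>)
  moreover have "inj_on (\<lambda>(x, y). (x @ [M], y)) (S_pairs k a b mu)"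
    by (auto simp: inj_on_def)
  ultimately show ?thesis
    by (simp add: card_image M_def)
qed

lemma card_S_pairs_snoc_one_bottom:
  assumes "b < a"
  shows "card {(x, y) \<in> S_pairs k a (Suc b) (mu @ [1]). Suc (length mu) \<in> set y} =
    card (S_pairs k a b mu)"
proof -
  define M where "M = Suc (length mu)"
  have "{(x, y) \<in> S_pairs k a (Suc b) (mu @ [1]). M \<in> set y} =
      (\<lambda>(x, y). (x, y @ [M])) ` S_pairs k a b mu"
  proof (intro equalityI subsetI)
    fix z assume z: "z \<in> {(x, y) \<in> S_pairs k a (Suc b) (mu @ [1]). M \<in> set y}"
    obtain x y' where z_eq: "z = (x, y')"
      by fastforce
    from z have mem: "(x, y') \<in> S_pairs k a (Suc b) (mu @ [1])" and "M \<in> set y'"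
      by (simp_all add: z_eq)
    then obtain y where "y' = y @ [M]" "\<forall>e\<in>set x \<union> set y. e < M"
      unfolding M_def by (cases rule: S_pairs_snoc_one_cases) auto
    with mem show "z \<in> (\<lambda>(x, y). (x, y @ [M])) ` S_pairs k a b mu"
      unfolding z_eq M_def by (auto simp: mem_S_pairs_snoc_bottom[OF assms] simp del: One_nat_def)
  qed (use mem_S_pairs_snoc_bottom[OF assms] S_pairs_entries_less in \<open>auto simp: M_def\<close>)
  moreover have "inj_on (\<lambda>(x, y). (x, y @ [M])) (S_pairs k a b mu)"
    by (auto simp: inj_on_def)
  ultimately show ?thesis
    by (simp add: card_image M_def)
qed

lemma card_S_pairs_snoc_one_top_diagonal:
  "card {(x, y) \<in> S_pairs k (Suc a) (Suc a) (mu @ [1]). Suc (length mu) \<in> set x} =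
    (if k = 0 then 0 else card (S_pairs (k - 1) (Suc a) a mu))"
proof -
  define M where "M = Suc (length mu)"
  define T where "T = (if k = 0 then {} else S_pairs (k - 1) (Suc a) a mu)"
  have "{(x, y) \<in> S_pairs k (Suc a) (Suc a) (mu @ [1]). M \<in> set x} =
      (\<lambda>(y, x). (x @ [M], y)) ` T"
  proof (intro equalityI subsetI)
    fix z assume z: "z \<in> {(x, y) \<in> S_pairs k (Suc a) (Suc a) (mu @ [1]). M \<in> set x}"
    obtain x' y where z_eq: "z = (x', y)"
      by fastforce
    from z have mem: "(x', y) \<in> S_pairs k (Suc a) (Suc a) (mu @ [1])" and "M \<in> set x'"
      by (simp_all add: z_eq)
    then obtain x where "x' = x @ [M]" "\<forall>e\<in>set x \<union> set y. e < M"
      unfolding M_def by (cases rule: S_pairs_snoc_one_cases) auto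
    with mem show "z \<in> (\<lambda>(y, x). (x @ [M], y)) ` T"
      unfolding z_eq M_def T_def
      by (auto simp: mem_S_pairs_snoc_top_swap simp del: One_nat_def)
  next
    fix z assume "z \<in> (\<lambda>(y, x). (x @ [M], y)) ` T"
    then obtain x y where "z = (x @ [M], y)" "(y, x) \<in> S_pairs (k - 1) (Suc a) a mu" "k \<noteq> 0"
      by (auto simp: T_def split: if_splits)
    moreover from this have "\<forall>e\<in>set x \<union> set y. e < M"
      using S_pairs_entries_less unfolding M_def by blast
    ultimately show "z \<in> {(x, y) \<in> S_pairs k (Suc a) (Suc a) (mu @ [1]). M \<in> set x}"
      unfolding M_def by (simp add: mem_S_pairs_snoc_top_swap del: One_nat_def)
  qed
  moreover have "inj_on (\<lambda>(y, x). (x @ [M], y)) T"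
    by (auto simp: inj_on_def)
  moreover have "finite T"
    by (simp add: T_def finite_S_pairs)
  ultimately show ?thesis
    by (simp add: card_image M_def T_def)
qed

lemma card_S_pairs_Suc_0_snoc_one:
  "card (S_pairs k (Suc a) 0 (mu @ [1])) = card (S_pairs k a 0 mu)"
proof -
  have "{(x, y) \<in> S_pairs k (Suc a) 0 (mu @ [1]). Suc (length mu) \<in> set y} = {}"
    by (auto simp: mem_S_pairs)
  with card_S_pairs_snoc_one[of k "Suc a" 0 mu] card_S_pairs_snoc_one_top[of 0 a k mu]
  show ?thesis
    by (simp only: card.empty add_0_right)
qed

lemma card_S_pairs_Suc_Suc_snoc_one:
  assumes "b < a"
  shows "card (S_pairs k (Suc a) (Suc b) (mu @ [1])) =
    card (S_pairs k a (Suc b) mu) + card (S_pairs k (Suc a) b mu)"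
  using assms card_S_pairs_snoc_one[of k "Suc a" "Suc b" mu]
    card_S_pairs_snoc_one_top[of "Suc b" a k mu] card_S_pairs_snoc_one_bottom[of b "Suc a" k mu]
  by simp

lemma card_S_pairs_diagonal_snoc_one:
  "card (S_pairs k (Suc a) (Suc a) (mu @ [1])) =
    (if k = 0 then 0 else card (S_pairs (k - 1) (Suc a) a mu)) + card (S_pairs k (Suc a) a mu)"
  using card_S_pairs_snoc_one[of k "Suc a" "Suc a" mu]
    card_S_pairs_snoc_one_top_diagonal[of k a mu] card_S_pairs_snoc_one_bottom[of a "Suc a" k mu]
  by simp

section \<open>Ballot numbers\<close>

definition int_choose :: "nat \<Rightarrow> int \<Rightarrow> int" where
  "int_choose n c = (if c < 0 then 0 else int (n choose nat c))"

definition ballot :: "nat \<Rightarrow> int \<Rightarrow> int" where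
  "ballot n c = int_choose n c - int_choose n (c - 1)"

lemma int_choose_Suc: "int_choose (Suc n) c = int_choose n c + int_choose n (c - 1)"
proof (cases "c \<le> 0")
  case False
  then have "nat c = Suc (nat (c - 1))"
    by simp
  then show ?thesis
    using False by (simp add: int_choose_def)
qed (auto simp: int_choose_def)

lemma ballot_Suc: "ballot (Suc n) c = ballot n c + ballot n (c - 1)"
  by (simp add: ballot_def int_choose_Suc)

lemma ballot_neg: "c < 0 \<Longrightarrow> ballot n c = 0"
  by (simp add: ballot_def int_choose_def)

lemma ballot_0 [simp]: "ballot n 0 = 1"
  by (simp add: ballot_def int_choose_def)

lemma ballot_middle: "ballot (2 * p + 1) (int p + 1) = 0"
proof -
  have "(2 * p + 1) choose (p + 1) = (2 * p + 1) choose p"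
    using binomial_symmetric[of "p + 1" "2 * p + 1"] by simp
  then show ?thesis
    by (simp add: ballot_def int_choose_def nat_add_distrib)
qed

lemma ballot_real:
  assumes "c \<le> n"
  shows "real_of_int (ballot n (int c)) =
    (real n - 2 * real c + 1) / (real n - real c + 1) * real (n choose c)"
proof (cases c)
  case (Suc d)
  have pos: "real n - real c + 1 > 0"
    using assms by simp
  have "(n - d) * (n choose d) = c * (n choose c)"
    using binomial_absorb_comp[of n d] binomial_absorption[of d n] Suc by simp
  then have "real (n - d) * real (n choose d) = real c * real (n choose c)"
    by (metis of_nat_mult)
  moreover have "real (n - d) = real n - real c + 1"
    using assms Suc by (simp add: of_nat_diff)
  ultimately have choose_d: "real (n choose d) = real c * real (n choose c) / (real n - real c + 1)"
    using pos by (simp add: field_simps)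
  have "nat (int c - 1) = d" "0 < c"
    using Suc by simp_all
  then have "real_of_int (ballot n (int c)) = real (n choose c) - real (n choose d)"
    by (simp add: ballot_def int_choose_def)
  then show ?thesis
    unfolding choose_d using pos by (simp add: field_simps)
qed simp

definition ballot_count :: "nat \<Rightarrow> nat \<Rightarrow> nat \<Rightarrow> nat \<Rightarrow> int" where
  "ballot_count a b m k = ballot (a + b - 2 * m) (int b - int m - int k)"

lemma ballot_count_0_0: "ballot_count 0 0 0 k = (if k = 0 then 1 else 0)"
  by (simp add: ballot_count_def ballot_neg)

lemma ballot_count_Suc_Suc_Suc: "ballot_count (Suc a) (Suc b) (Suc m) k = ballot_count a b m k"
  by (simp add: ballot_count_def)

lemma ballot_count_0_Suc: "ballot_count a 0 (Suc m) k = 0"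
  by (simp add: ballot_count_def ballot_neg)

lemma ballot_count_Suc_0:
  assumes "2 * m \<le> a"
  shows "ballot_count (Suc a) 0 m k = ballot_count a 0 m k"
proof -
  have "Suc a - 2 * m = Suc (a - 2 * m)"
    using assms by simp
  then show ?thesis
    by (simp add: ballot_count_def ballot_Suc ballot_neg)
qed

lemma ballot_count_Suc_Suc:
  assumes "2 * m \<le> Suc (a + b)"
  shows "ballot_count (Suc a) (Suc b) m k = ballot_count a (Suc b) m k + ballot_count (Suc a) b m k"
proof -
  have "Suc a + Suc b - 2 * m = Suc (a + Suc b - 2 * m)" "Suc a + b - 2 * m = a + Suc b - 2 * m"
    using assms by simp_all
  then show ?thesis
    by (simp add: ballot_count_def ballot_Suc algebra_simps)
qed

lemma ballot_count_diagonal: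
  assumes "m \<le> a"
  shows "ballot_count (Suc a) (Suc a) m k =
    (if k = 0 then 0 else ballot_count (Suc a) a m (k - 1)) + ballot_count (Suc a) a m k"
proof -
  define n where "n = 2 * (a - m) + 1"
  define c where "c = int (a - m) + 1 - int k"
  have "Suc a + Suc a - 2 * m = Suc n" "Suc a + a - 2 * m = n"
    using assms by (simp_all add: n_def)
  then have "ballot_count (Suc a) (Suc a) m k = ballot n c + ballot n (c - 1)"
    and "ballot_count (Suc a) a m k = ballot n (c - 1)"
    and "k \<noteq> 0 \<Longrightarrow> ballot_count (Suc a) a m (k - 1) = ballot n c"
    using assms by (simp_all add: ballot_count_def ballot_Suc c_def of_nat_diff algebra_simps)
  moreover have "k = 0 \<Longrightarrow> ballot n c = 0"
    using ballot_middle[of "a - m"] by (simp add: n_def c_def)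
  ultimately show ?thesis
    by simp
qed

lemma card_S_pairs_eq_ballot_count:
  assumes "b \<le> a" "sum_list mu = a + b" "set mu \<subseteq> {1, 2}" "length (filter (\<lambda>x. x = 2) mu) = m"
  shows "int (card (S_pairs k a b mu)) = ballot_count a b m k"
  using assms
proof (induction mu arbitrary: a b k m rule: rev_induct)
  case Nil
  then have "a = 0" "b = 0" "m = 0"
    by simp_all
  moreover have "S_pairs k 0 0 [] = (if k = 0 then {([], [])} else {})"
    by (auto simp: mem_S_pairs has_content_def inverted_columns_def)
  ultimately show ?case
    by (simp add: ballot_count_0_0)
next
  case (snoc t mu)
  let ?m = "length (filter (\<lambda>x. x = 2) mu)"
  have IH: "int (card (S_pairs k a b mu)) = ballot_count a b ?m k"
    if "b \<le> a" "sum_list mu = a + b" for a b k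
    using snoc.IH that snoc.prems(3) by simp
  have sum_mu: "sum_list mu = length mu + ?m"
    using snoc.prems(3) by (simp add: sum_list_one_two)
  have "?m \<le> length mu"
    by (rule length_filter_le)
  consider (two) "t = 2" | (one) "t = 1"
    using snoc.prems(3) by auto
  then show ?case
  proof cases
    case two
    then have m: "m = Suc ?m"
      using snoc.prems(4) by simp
    show ?thesis
    proof (cases b)
      case 0
      then show ?thesis
        using two m by (simp add: S_pairs_0_snoc_two ballot_count_0_Suc)
    next
      case (Suc b')
      moreover obtain a' where "a = Suc a'"
        using Suc snoc.prems(1) by (cases a) auto
      ultimately show ?thesis
        using IH[of b' a' k] card_S_pairs_snoc_two[of b' a' k mu] snoc.prems(1,2) two m
        by (simp add: ballot_count_Suc_Suc_Suc)
    qed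
  next
    case one
    then have m: "m = ?m" and ab: "a + b = Suc (length mu + ?m)"
      using snoc.prems(2,4) sum_mu by simp_all
    obtain a' where a: "a = Suc a'"
      using ab snoc.prems(1) by (cases a) auto
    consider (zero) "b = 0" | (below) b' where "b = Suc b'" "b' < a'" | (diagonal) "b = Suc a'"
      using snoc.prems(1) a by (cases b) (auto simp: le_less)
    then show ?thesis
    proof cases
      case zero
      then show ?thesis
        using IH[of 0 a' k] card_S_pairs_Suc_0_snoc_one[of k a' mu] ballot_count_Suc_0[of m a' k]
          ab a m \<open>?m \<le> length mu\<close> sum_mu one by simp
    next
      case below
      then show ?thesis
        using IH[of "Suc b'" a' k] IH[of b' "Suc a'" k] card_S_pairs_Suc_Suc_snoc_one[of b' a' k mu]
          ballot_count_Suc_Suc[of m a' b' k] ab a m \<open>?m \<le> length mu\<close> sum_mu one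
        by simp
    next
      case diagonal
      then show ?thesis
        using IH[of a' "Suc a'" "k - 1"] IH[of a' "Suc a'" k] card_S_pairs_diagonal_snoc_one[of k a' mu]
          ballot_count_diagonal[of m a' k] ab a m \<open>?m \<le> length mu\<close> sum_mu one
        by (simp split: if_splits)
    qed
  qed
qed

lemma ballot_count_real:
  assumes "b \<le> a"
  shows "real_of_int (ballot_count a b m k) =
    (if b < k + m then 0
     else (real a - real b + 1 + 2 * real k) / (real a + 1 + real k - real m)
          * real ((a + b - 2 * m) choose (b - k - m)))"
proof (cases "b < k + m")
  case True
  then show ?thesis
    by (simp add: ballot_count_def ballot_neg)
next
  case False
  define n where "n = a + b - 2 * m"
  define c where "c = b - k - m"
  have "ballot_count a b m k = ballot n (int c)" "c \<le> n"
    using False assms by (auto simp: ballot_count_def n_def c_def algebra_simps)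
  then have "real_of_int (ballot_count a b m k) =
      (real n - 2 * real c + 1) / (real n - real c + 1) * real (n choose c)"
    by (simp add: ballot_real)
  moreover have "real n - 2 * real c + 1 = real a - real b + 1 + 2 * real k"
    and "real n - real c + 1 = real a + 1 + real k - real m"
    using False assms by (auto simp: n_def c_def of_nat_diff)
  ultimately show ?thesis
    using False by (simp only: n_def c_def if_False)
qed

theorem mainTheorem15:
  fixes a b m :: nat and mu :: "nat list"
  assumes "a \<ge> b" and "b \<ge> 1"
    and "sum_list mu = a + b"
    and "set mu \<subseteq> {1, 2}"
    and "length (filter (\<lambda>x. x = 2) mu) = m"
  shows "\<forall>k::nat. real (card (S k [a, b] mu)) =
           (if b < k + m then 0
            else (real a - real b + 1 + 2 * real k) / (real a + 1 + real k - real m)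
                 * real ((a + b - 2 * m) choose (b - k - m)))"
proof
  fix k :: nat
  have "real (card (S k [a, b] mu)) = real_of_int (ballot_count a b m k)"
    using card_S_pairs_eq_ballot_count[OF assms(1,3-5)]
    by (metis card_S_eq_card_S_pairs of_int_of_nat_eq)
  then show "real (card (S k [a, b] mu)) =
      (if b < k + m then 0
       else (real a - real b + 1 + 2 * real k) / (real a + 1 + real k - real m)
            * real ((a + b - 2 * m) choose (b - k - m)))"
    using ballot_count_real[OF assms(1)] by simp
qed

end
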